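(* If $t$ is an $l$-term with $t\to_s^* F_1$, then there exists an $s$-reduction from $t$ to $F_1$ in which no contracted redex occurs inside a tuple (i.e. no contracted redex occurrence lies within a component of a tuple subterm of the term being contracted).
   Context: $i$-terms (unlabelled terms) are built from variables and the constants $C,T,F,K,S$ by binary application (left-associative). $\mathrm{CLC}$ is the conditional system with rules $C\,T\,x\,y\to x$; $C\,F\,x\,y\to y$; $C\,z\,x\,y\to x \Leftarrow x=y$; $K\,x\,y\to x$; $S\,x\,y\,z\to x\,z\,(y\,z)$, where $=$ is convertibility in $\mathrm{CLC}$ itself (defined by levels: $R_0$ with empty condition, $R_{n+1}$ with $=$ the conversion of $\to_{R_n}$, $\to_{\mathrm{CLC}}=\bigcup_n\to_{R_n}$); $=_{\mathrm{CLC}}$ is conversion in $\mathrm{CLC}$. Labelled constants: $C_1,C_2,T_1,F_1,K_1$ and $S^{n_0,\dots,n_k}$ for all $k\ge1$, $n_0,\dots,n_k\ge1$. $l$-terms: every $i$-term; every labelled constant; $t_1t_2$ for $l$-terms $t_1,t_2$; and $\langle t_1,\dots,t_n\rangle$ for $l$-terms $t_1,\dots,t_n$ with $n\ge2$ (a tuple of size $n$). Convention: $\langle t\rangle\equiv t$ (not a tuple). Erasures: an $i$-term is an erasure of itself; $C$ is an erasure of $C_1,C_2$; $T$ of $T_1$; $F$ of $F_1$; $K$ of $K_1$; $S$ of each $S^{n_0,\dots,n_k}$; if $q_1,q_2$ are erasures of $t_1,t_2$ then $q_1q_2$ is an erasure of $t_1t_2$; if $q_i$ is an erasure of $t_i$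 for some $i$ then $q_i$ is an erasure of $\langle t_1,\dots,t_n\rangle$. The leftmost erasure $\lfloor t\rfloor$ always chooses $i=1$ for tuples. $\mathrm{CLC}_s$ is the rewriting system on $l$-terms (variables instantiated by arbitrary $l$-terms, contraction allowed in any context, including inside tuple components) with rules: $C_1T_1xy\to x$; $C_1F_1xy\to y$; $C_2zxy\to x\Leftarrow\lfloor x\rfloor=_{\mathrm{CLC}}\lfloor y\rfloor$; $C_2Txy\to x$; $C_2Fxy\to y$; $C_2T_1xy\to x$; $C_2F_1xy\to y$; $K_1xy\to x$; and, for each $S^{n_0,\dots,n_k}$, $S^{n_0,\dots,n_k}\,x\,\langle y_1,\dots,y_k\rangle\,\langle z_{0,1},\dots,z_{0,n_0},z_{1,1},\dots,z_{1,n_1},\dots,z_{k,1},\dots,z_{k,n_k}\rangle \to x\,\langle z_{0,1},\dots,z_{0,n_0}\rangle\,\langle y_1\langle z_{1,1},\dots,z_{1,n_1}\rangle,\dots,y_k\langle z_{k,1},\dots,z_{k,n_k}\rangle\rangle$ under the condition that $\lfloor z_{i,j}\rfloor=_{\mathrm{CLC}}\lfloor z_{i',j'}\rfloor$ for all index pairs and $\lfloor y_i\rfloor=_{\mathrm{CLC}}\lfloor y_j\rfloor$ for all $i,j$. One-step contraction in $\mathrm{CLC}_s$ is written $\to_s$ and $\to_s^*$ is its reflexive–transitive closure ($s$-reduction). *)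

theory Defs
  imports Main
begin

datatype iterm = IVar nat | IC | IT | IF | IK | IS | IApp iterm iterm

inductive clc_ctx :: "(iterm \<Rightarrow> iterm \<Rightarrow> bool) \<Rightarrow> iterm \<Rightarrow> iterm \<Rightarrow> bool"
  for cond :: "iterm \<Rightarrow> iterm \<Rightarrow> bool" where
  cT: "clc_ctx cond (IApp (IApp (IApp IC IT) x) y) x"
| cF: "clc_ctx cond (IApp (IApp (IApp IC IF) x) y) y"
| cZ: "cond x y \<Longrightarrow> clc_ctx cond (IApp (IApp (IApp IC z) x) y) x"
| cK: "clc_ctx cond (IApp (IApp IK x) y) x"
| cS: "clc_ctx cond (IApp (IApp (IApp IS x) y) z) (IApp (IApp x z) (IApp y z))"
| appL: "clc_ctx cond s s' \<Longrightarrow> clc_ctx cond (IApp s t) (IApp s' t)"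
| appR: "clc_ctx cond t t' \<Longrightarrow> clc_ctx cond (IApp s t) (IApp s t')"

primrec clc_R :: "nat \<Rightarrow> iterm \<Rightarrow> iterm \<Rightarrow> bool" where
  "clc_R 0 = clc_ctx (\<lambda>_ _. False)"
| "clc_R (Suc n) = clc_ctx (equivclp (clc_R n))"

definition clc_step :: "iterm \<Rightarrow> iterm \<Rightarrow> bool" where
  "clc_step s t \<longleftrightarrow> (\<exists>n. clc_R n s t)"

definition clc_conv :: "iterm \<Rightarrow> iterm \<Rightarrow> bool" where
  "clc_conv = equivclp clc_step"

datatype lterm =
    LVar nat | LC | LT | LF | LK | LS
  | LC1 | LC2 | LT1 | LF1 | LK1
  | LSl "nat list"   \<comment> \<open>S^{n_0,...,n_k}, label list [n_0,...,n_k]\<close>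
  | LApp lterm lterm
  | Tup "lterm list"

fun wf_lterm :: "lterm \<Rightarrow> bool" where
  "wf_lterm (LSl ns) \<longleftrightarrow> length ns \<ge> 2 \<and> (\<forall>n\<in>set ns. n \<ge> 1)"
| "wf_lterm (LApp s t) \<longleftrightarrow> wf_lterm s \<and> wf_lterm t"
| "wf_lterm (Tup ts) \<longleftrightarrow> length ts \<ge> 2 \<and> (\<forall>t\<in>set ts. wf_lterm t)"
| "wf_lterm _ \<longleftrightarrow> True"

fun mktup :: "lterm list \<Rightarrow> lterm" where
  "mktup [t] = t"
| "mktup ts = Tup ts"

fun lerase :: "lterm \<Rightarrow> iterm" where
  "lerase (LVar v) = IVar v"
| "lerase LC = IC" | "lerase LT = IT" | "lerase LF = IF" | "lerase LK = IK" | "lerase LS = IS"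
| "lerase LC1 = IC" | "lerase LC2 = IC" | "lerase LT1 = IT" | "lerase LF1 = IF" | "lerase LK1 = IK"
| "lerase (LSl ns) = IS"
| "lerase (LApp s t) = IApp (lerase s) (lerase t)"
| "lerase (Tup (t # ts)) = lerase t"
| "lerase (Tup []) = IVar 0"

inductive s_root :: "lterm \<Rightarrow> lterm \<Rightarrow> bool" where
  r1: "s_root (LApp (LApp (LApp LC1 LT1) x) y) x"
| r2: "s_root (LApp (LApp (LApp LC1 LF1) x) y) y"
| r3: "clc_conv (lerase x) (lerase y) \<Longrightarrow> s_root (LApp (LApp (LApp LC2 z) x) y) x"
| r4: "s_root (LApp (LApp (LApp LC2 LT) x) y) x"
| r5: "s_root (LApp (LApp (LApp LC2 LF) x) y) y"
| r6: "s_root (LApp (LApp (LApp LC2 LT1) x) y) x"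
| r7: "s_root (LApp (LApp (LApp LC2 LF1) x) y) y"
| r8: "s_root (LApp (LApp LK1 x) y) x"
| rS: "\<lbrakk> length ys \<ge> 1; length ns = Suc (length ys); length zss = length ns;
         \<forall>i<length ns. ns ! i \<ge> 1 \<and> length (zss ! i) = ns ! i;
         \<forall>a\<in>set (concat zss). \<forall>b\<in>set (concat zss). clc_conv (lerase a) (lerase b);
         \<forall>a\<in>set ys. \<forall>b\<in>set ys. clc_conv (lerase a) (lerase b) \<rbrakk> \<Longrightarrow>
       s_root (LApp (LApp (LApp (LSl ns) x) (mktup ys)) (Tup (concat zss)))
              (LApp (LApp x (mktup (hd zss)))
                    (mktup (map (\<lambda>(y, zs). LApp y (mktup zs)) (zip ys (tl zss)))))"

inductive s_ctx :: "bool \<Rightarrow> lterm \<Rightarrow> lterm \<Rightarrow> bool" for intup :: bool where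
  root: "s_root s t \<Longrightarrow> s_ctx intup s t"
| appL: "s_ctx intup s s' \<Longrightarrow> s_ctx intup (LApp s t) (LApp s' t)"
| appR: "s_ctx intup t t' \<Longrightarrow> s_ctx intup (LApp s t) (LApp s t')"
| tup: "\<lbrakk> intup; i < length ts; s_ctx intup (ts ! i) u \<rbrakk> \<Longrightarrow>
          s_ctx intup (Tup ts) (Tup (ts[i := u]))"

abbreviation s_step :: "lterm \<Rightarrow> lterm \<Rightarrow> bool" where
  "s_step \<equiv> s_ctx True"

abbreviation s_step_notup :: "lterm \<Rightarrow> lterm \<Rightarrow> bool" where
  "s_step_notup \<equiv> s_ctx False"

end

theory Submission
  imports Defs
begin

text \<open>
  Split every s-step into an outer step (the redex is not inside a tuple) and a step inside
  a tuple. A step inside a tuple can be postponed past a following outer step: if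
  \<open>t \<rightarrow>\<^sub>i\<^sub>n u \<rightarrow>\<^sub>o\<^sub>u\<^sub>t v\<close> then \<open>t \<rightarrow>\<^sub>o\<^sub>u\<^sub>t w \<rightarrow>\<^sup>= v\<close>. The outer redex survives in \<open>t\<close> because
  contraction preserves leftmost erasures up to CLC-conversion, so the conditions of the
  conditional C- and S-rules still hold when an argument or tuple component is replaced by
  its predecessor. Since no step inside a tuple ends in \<open>F\<^sub>1\<close>, postponing repeatedly
  (by induction on the outer reduction) removes all steps inside tuples from a reduction
  to \<open>F\<^sub>1\<close>.
\<close>

lemma equivclp_mono: "r \<le> s \<Longrightarrow> equivclp r \<le> equivclp s"
  unfolding equivclp_def by (rule rtranclp_mono) (auto simp: symclp_def)

lemma equivclp_map:
  assumes "equivclp r a b" and "\<And>x y. r x y \<Longrightarrow> s (f x) (f y)"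
  shows "equivclp s (f a) (f b)"
  using assms(1) by (induction rule: equivclp_induct) (auto dest: assms(2) intro: equivclp_into_equivclp)

lemma clc_ctx_mono:
  assumes "c \<le> c'"
  shows "clc_ctx c \<le> clc_ctx c'"
proof
  fix a b assume "clc_ctx c a b"
  then show "clc_ctx c' a b"
    using assms by induction (auto intro: clc_ctx.intros)
qed

lemma clc_R_le_Suc: "clc_R n \<le> clc_R (Suc n)"
proof (induction n)
  case 0 show ?case by (simp add: clc_ctx_mono le_funI)
next
  case (Suc n) then show ?case by (simp add: clc_ctx_mono equivclp_mono)
qed

lemma clc_R_mono: "n \<le> m \<Longrightarrow> clc_R n \<le> clc_R m"
  by (rule lift_Suc_mono_le[of clc_R, OF clc_R_le_Suc])

lemma clc_conv_equivclp_clc_R: "clc_conv a b \<Longrightarrow> \<exists>n. equivclp (clc_R n) a b"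
  unfolding clc_conv_def
proof (induction rule: equivclp_induct)
  case base then show ?case by auto
next
  case (step y z)
  then obtain n m where n: "equivclp (clc_R n) a y" and m: "clc_R m y z \<or> clc_R m z y"
    unfolding clc_step_def by blast
  have "equivclp (clc_R (max n m)) a y"
    using equivclp_mono[OF clc_R_mono[of n "max n m"]] n by auto
  moreover have "clc_R (max n m) y z \<or> clc_R (max n m) z y"
    using clc_R_mono[of m "max n m"] m by auto
  ultimately show ?case by (blast intro: equivclp_into_equivclp)
qed

lemma clc_R_into_clc_conv: "clc_R n a b \<Longrightarrow> clc_conv a b"
  unfolding clc_conv_def clc_step_def by blast

lemma clc_conv_refl [simp]: "clc_conv a a"
  by (simp add: clc_conv_def)

lemma clc_conv_sym: "clc_conv a b \<Longrightarrow> clc_conv b a"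
  unfolding clc_conv_def by (rule equivclp_sym)

lemma clc_conv_trans [trans]: "clc_conv a b \<Longrightarrow> clc_conv b c \<Longrightarrow> clc_conv a c"
  unfolding clc_conv_def by (rule equivclp_trans)

lemma clc_conv_IApp: "clc_conv a b \<Longrightarrow> clc_conv c d \<Longrightarrow> clc_conv (IApp a c) (IApp b d)"
proof -
  have "clc_R n (IApp x c) (IApp y c) \<and> clc_R n (IApp c x) (IApp c y)" if "clc_R n x y" for n x y c
    using that by (cases n) (auto intro: clc_ctx.appL clc_ctx.appR)
  then have appL: "clc_step (IApp x c) (IApp y c)" and appR: "clc_step (IApp c x) (IApp c y)"
    if "clc_step x y" for x y c
    using that unfolding clc_step_def by blast+
  assume "clc_conv a b" "clc_conv c d"
  then have "clc_conv (IApp a c) (IApp b c)" and "clc_conv (IApp b c) (IApp b d)"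
    unfolding clc_conv_def by (auto elim!: equivclp_map intro: appL appR)
  then show ?thesis by (rule clc_conv_trans)
qed

lemma clc_conv_cond_rule: "clc_conv x y \<Longrightarrow> clc_conv (IApp (IApp (IApp IC z) x) y) x"
proof -
  assume "clc_conv x y"
  then obtain n where "equivclp (clc_R n) x y" using clc_conv_equivclp_clc_R by blast
  then have "clc_R (Suc n) (IApp (IApp (IApp IC z) x) y) x" by (auto intro: clc_ctx.cZ)
  then show ?thesis by (rule clc_R_into_clc_conv)
qed

lemma clc_ctx_False_into_clc_conv: "clc_ctx (\<lambda>_ _. False) a b \<Longrightarrow> clc_conv a b"
  using clc_R_into_clc_conv[of 0] by simp

section \<open>Contraction preserves erasures up to conversion\<close>

lemma lerase_mktup: "xs \<noteq> [] \<Longrightarrow> lerase (mktup xs) = lerase (hd xs)"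
  by (cases xs rule: mktup.cases) auto

lemma mktup_eq_Tup: "length xs \<ge> 2 \<Longrightarrow> mktup xs = Tup xs"
  by (cases xs rule: mktup.cases) auto

definition erasures_convertible :: "lterm list \<Rightarrow> bool" where
  "erasures_convertible xs \<longleftrightarrow> (\<forall>a\<in>set xs. \<forall>b\<in>set xs. clc_conv (lerase a) (lerase b))"

definition S_redex_args :: "nat list \<Rightarrow> lterm list \<Rightarrow> lterm list list \<Rightarrow> bool" where
  "S_redex_args ns ys zss \<longleftrightarrow>
     length ys \<ge> 1 \<and> length ns = Suc (length ys) \<and> length zss = length ns \<and>
     (\<forall>i<length ns. ns ! i \<ge> 1 \<and> length (zss ! i) = ns ! i) \<and>
     erasures_convertible (concat zss) \<and> erasures_convertible ys"

definition S_contractum :: "lterm \<Rightarrow> lterm list \<Rightarrow> lterm list list \<Rightarrow> lterm" where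
  "S_contractum x ys zss =
     LApp (LApp x (mktup (hd zss))) (mktup (map (\<lambda>(y, zs). LApp y (mktup zs)) (zip ys (tl zss))))"

lemma s_root_S:
  "S_redex_args ns ys zss \<Longrightarrow>
   s_root (LApp (LApp (LApp (LSl ns) x) (mktup ys)) (Tup (concat zss))) (S_contractum x ys zss)"
  unfolding S_redex_args_def erasures_convertible_def S_contractum_def
  by (elim conjE) (rule s_root.rS)

lemma S_redex_args_shape:
  assumes "S_redex_args ns ys zss"
  obtains y ys' z0 z0s z1 z1s zss' where
    "ys = y # ys'" "zss = (z0 # z0s) # (z1 # z1s) # zss'"
proof -
  have len: "length ys \<ge> 1" "length zss = Suc (length ys)"
    and lens: "\<And>i. i < length zss \<Longrightarrow> length (zss ! i) \<ge> 1"
    using assms unfolding S_redex_args_def by auto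
  obtain y ys' where ys: "ys = y # ys'"
    using len(1) by (cases ys) auto
  obtain zs0 zs1 zss' where zss: "zss = zs0 # zs1 # zss'"
    using len(2) ys by (cases zss; cases "tl zss") auto
  have "zs0 \<noteq> []" "zs1 \<noteq> []"
    using lens[of 0] lens[of 1] zss by auto
  then show thesis using that ys zss by (cases zs0; cases zs1) auto
qed

lemma S_contractum_lerase_conv:
  assumes "S_redex_args ns ys zss"
  shows "clc_conv (lerase (LApp (LApp (LApp (LSl ns) x) (mktup ys)) (Tup (concat zss))))
                  (lerase (S_contractum x ys zss))"
proof -
  obtain y ys' z0 z0s z1 z1s zss' where
    ys: "ys = y # ys'" and zss: "zss = (z0 # z0s) # (z1 # z1s) # zss'"
    using S_redex_args_shape[OF assms] .
  have "clc_conv (lerase z0) (lerase z1)"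
    using assms zss unfolding S_redex_args_def erasures_convertible_def by simp
  have "clc_conv (IApp (IApp (IApp IS (lerase x)) (lerase y)) (lerase z0))
                 (IApp (IApp (lerase x) (lerase z0)) (IApp (lerase y) (lerase z0)))"
    by (rule clc_ctx_False_into_clc_conv) (rule clc_ctx.cS)
  also have "clc_conv \<dots> (IApp (IApp (lerase x) (lerase z0)) (IApp (lerase y) (lerase z1)))"
    using \<open>clc_conv (lerase z0) (lerase z1)\<close> by (intro clc_conv_IApp clc_conv_refl)
  finally show ?thesis
    unfolding S_contractum_def using ys zss by (simp add: lerase_mktup)
qed

lemma s_root_lerase_conv: "s_root s t \<Longrightarrow> clc_conv (lerase s) (lerase t)"
proof (induction rule: s_root.induct)
  case (r3 x y z) then show ?case by (simp add: clc_conv_cond_rule)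
next
  case (rS ys ns zss x)
  then have "S_redex_args ns ys zss"
    unfolding S_redex_args_def erasures_convertible_def by blast
  then show ?case using S_contractum_lerase_conv unfolding S_contractum_def by blast
qed (auto intro!: clc_ctx_False_into_clc_conv intro: clc_ctx.intros)

lemma s_ctx_lerase_conv: "s_ctx b s t \<Longrightarrow> clc_conv (lerase s) (lerase t)"
proof (induction rule: s_ctx.induct)
  case (tup i ts u) then show ?case by (cases ts; cases i) auto
qed (auto simp: s_root_lerase_conv clc_conv_IApp)

lemma erasures_convertible_insert:
  assumes "erasures_convertible xs" "clc_conv (lerase a) (lerase c)" "c \<in> set xs"
    and "set ys \<subseteq> insert a (set xs)"
  shows "erasures_convertible ys"
proof -
  have "clc_conv (lerase b) (lerase c)" if "b \<in> set ys" for b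
    using that assms unfolding erasures_convertible_def by auto
  then show ?thesis
    unfolding erasures_convertible_def by (blast intro: clc_conv_trans clc_conv_sym)
qed

lemma concat_list_update:
  assumes "j < length (concat zss)"
  obtains i k where "i < length zss" "k < length (zss ! i)" "concat zss ! j = zss ! i ! k"
    "(concat zss)[j := a] = concat (zss[i := (zss ! i)[k := a]])"
proof -
  have "\<exists>i k. i < length zss \<and> k < length (zss ! i) \<and> concat zss ! j = zss ! i ! k \<and>
          (concat zss)[j := a] = concat (zss[i := (zss ! i)[k := a]])"
    using assms
  proof (induction zss arbitrary: j)
    case (Cons zs zss)
    show ?case
    proof (cases "j < length zs")
      case True
      then show ?thesis
        by (intro exI[of _ 0] exI[of _ j]) (auto simp: list_update_append nth_append)
    next
      case False
      with Cons.prems have "j - length zs < length (concat zss)" by auto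
      from Cons.IH[OF this] obtain i k where "i < length zss" "k < length (zss ! i)"
        "concat zss ! (j - length zs) = zss ! i ! k"
        "(concat zss)[j - length zs := a] = concat (zss[i := (zss ! i)[k := a]])"
        by blast
      with False show ?thesis
        by (intro exI[of _ "Suc i"] exI[of _ k]) (auto simp: list_update_append nth_append)
    qed
  qed simp
  then show thesis using that by blast
qed

lemma S_redex_args_update_y:
  assumes "S_redex_args ns ys zss" "i < length ys" "s_step a (ys ! i)"
  shows "S_redex_args ns (ys[i := a]) zss"
proof -
  have "erasures_convertible ys" using assms(1) by (simp add: S_redex_args_def)
  moreover have "clc_conv (lerase a) (lerase (ys ! i))" using assms(3) by (rule s_ctx_lerase_conv)
  ultimately have "erasures_convertible (ys[i := a])"
    using nth_mem[OF assms(2)] set_update_subset_insert[of ys i a]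
    by (rule erasures_convertible_insert)
  then show ?thesis using assms(1) by (simp add: S_redex_args_def)
qed

lemma S_redex_args_update_z:
  assumes "S_redex_args ns ys zss" "i < length zss" "k < length (zss ! i)" "s_step d (zss ! i ! k)"
  shows "S_redex_args ns ys (zss[i := (zss ! i)[k := d]])"
proof -
  have "erasures_convertible (concat zss)"
    using assms(1) by (simp add: S_redex_args_def)
  moreover have "clc_conv (lerase d) (lerase (zss ! i ! k))"
    using assms(4) by (rule s_ctx_lerase_conv)
  moreover have "zss ! i ! k \<in> set (concat zss)"
    using assms(2,3) by (auto intro!: bexI[of _ "zss ! i"])
  moreover have "set (concat (zss[i := (zss ! i)[k := d]])) \<subseteq> insert d (set (concat zss))"
    using set_update_subset_insert[of zss i] set_update_subset_insert[of "zss ! i" k d] assms(2)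
    by fastforce
  ultimately have "erasures_convertible (concat (zss[i := (zss ! i)[k := d]]))"
    by (rule erasures_convertible_insert)
  then show ?thesis
    using assms(1,2) by (auto simp: S_redex_args_def nth_list_update)
qed

lemma s_step_mktup_update:
  assumes "i < length xs" "s_step a (xs ! i)"
  shows "s_step (mktup (xs[i := a])) (mktup xs)"
proof (cases "length xs \<ge> 2")
  case True
  have "s_step (Tup (xs[i := a])) (Tup (xs[i := a, i := xs ! i]))"
    using assms by (intro s_ctx.tup) auto
  with True show ?thesis by (simp add: mktup_eq_Tup)
next
  case False
  with assms show ?thesis by (cases xs rule: mktup.cases) auto
qed

lemma map_zip_update_left:
  "i < length ys \<Longrightarrow> length zs = length ys \<Longrightarrow>
   map f (zip (ys[i := a]) zs) = (map f (zip ys zs))[i := f (a, zs ! i)]"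
  by (metis list_update_id map_update zip_update)

lemma map_zip_update_right:
  "i < length ys \<Longrightarrow> length zs = length ys \<Longrightarrow>
   map f (zip ys (zs[i := a])) = (map f (zip ys zs))[i := f (ys ! i, a)]"
  by (metis list_update_id map_update zip_update)

lemma S_contractum_update_y:
  assumes "length (tl zss) = length ys" "i < length ys" "s_step a (ys ! i)"
  shows "s_step (S_contractum x (ys[i := a]) zss) (S_contractum x ys zss)"
proof -
  define M where "M = map (\<lambda>(y, zs). LApp y (mktup zs)) (zip ys (tl zss))"
  have "s_step (mktup (M[i := LApp a (mktup (tl zss ! i))])) (mktup M)"
    using assms by (intro s_step_mktup_update) (auto simp: M_def intro: s_ctx.appL)
  then show ?thesis
    using assms unfolding S_contractum_def M_def by (simp add: map_zip_update_left s_ctx.appR)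
qed

lemma S_contractum_update_z:
  assumes "length (tl zss) = length ys" "i < length zss" "k < length (zss ! i)"
    and "s_step d (zss ! i ! k)"
  shows "s_step (S_contractum x ys (zss[i := (zss ! i)[k := d]])) (S_contractum x ys zss)"
proof -
  obtain z zs where zss: "zss = z # zs" using assms(2) by (cases zss) auto
  show ?thesis
  proof (cases i)
    case 0
    have "s_step (mktup (z[k := d])) (mktup z)"
      using assms zss 0 by (intro s_step_mktup_update) auto
    then show ?thesis
      using zss 0 unfolding S_contractum_def by (auto intro: s_ctx.appL s_ctx.appR)
  next
    case (Suc i')
    define M where "M = map (\<lambda>(y, zs). LApp y (mktup zs)) (zip ys zs)"
    have i': "i' < length ys" using assms(1,2) zss Suc by simp
    have "s_step (mktup ((zs ! i')[k := d])) (mktup (zs ! i'))"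
      using assms zss Suc by (intro s_step_mktup_update) auto
    then have "s_step (mktup (M[i' := LApp (ys ! i') (mktup ((zs ! i')[k := d]))])) (mktup M)"
      using assms(1) zss i' by (intro s_step_mktup_update) (auto simp: M_def intro: s_ctx.appR)
    then show ?thesis
      using assms(1) zss Suc i' unfolding S_contractum_def M_def
      by (simp add: map_zip_update_right s_ctx.appR)
  qed
qed

section \<open>Postponing steps inside tuples\<close>

inductive s_step_in_tup :: "lterm \<Rightarrow> lterm \<Rightarrow> bool" where
  tup: "i < length ts \<Longrightarrow> s_step (ts ! i) u \<Longrightarrow> s_step_in_tup (Tup ts) (Tup (ts[i := u]))"
| appL: "s_step_in_tup s s' \<Longrightarrow> s_step_in_tup (LApp s t) (LApp s' t)"
| appR: "s_step_in_tup t t' \<Longrightarrow> s_step_in_tup (LApp s t) (LApp s t')"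

lemma s_step_in_tup_into_s_step: "s_step_in_tup s t \<Longrightarrow> s_step s t"
  by (induction rule: s_step_in_tup.induct) (auto intro: s_ctx.intros)

lemma s_step_cases:
  assumes "s_step s t"
  shows "s_step_notup s t \<or> s_step_in_tup s t"
proof -
  have "s_ctx b s t \<Longrightarrow> b \<Longrightarrow> s_step_notup s t \<or> s_step_in_tup s t" for b
    by (induction rule: s_ctx.induct) (auto intro: s_ctx.intros s_step_in_tup.intros)
  with assms show ?thesis by blast
qed

lemma s_step_in_tup_LAppE:
  assumes "s_step_in_tup t (LApp a b)"
  obtains (left) a0 where "t = LApp a0 b" "s_step_in_tup a0 a"
    | (right) b0 where "t = LApp a b0" "s_step_in_tup b0 b"
  using assms by (cases rule: s_step_in_tup.cases) auto

lemma s_step_in_tup_TupE: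
  assumes "s_step_in_tup t (Tup ys)"
  obtains i a where "i < length ys" "t = Tup (ys[i := a])" "s_step a (ys ! i)"
proof -
  from assms obtain ts i u where "t = Tup ts" "i < length ts" "ys = ts[i := u]" "s_step (ts ! i) u"
    by (cases rule: s_step_in_tup.cases) auto
  then show thesis using that[of i "ts ! i"] by auto
qed

lemma s_step_in_tup_mktupE:
  assumes "s_step_in_tup t (mktup ys)" "ys \<noteq> []"
  obtains i a where "i < length ys" "t = mktup (ys[i := a])" "s_step a (ys ! i)"
proof (cases "length ys \<ge> 2")
  case True
  with assms(1) have "s_step_in_tup t (Tup ys)" by (simp add: mktup_eq_Tup)
  then obtain i a where "i < length ys" "t = Tup (ys[i := a])" "s_step a (ys ! i)"
    by (rule s_step_in_tup_TupE)
  with True show thesis using that by (simp add: mktup_eq_Tup)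
next
  case False
  with assms obtain y where "ys = [y]" by (cases ys rule: mktup.cases) auto
  with assms(1) show thesis using that[of 0 t] by (auto intro: s_step_in_tup_into_s_step)
qed

lemma s_step_in_tup_target: "s_step_in_tup t u \<Longrightarrow> (\<exists>a b. u = LApp a b) \<or> (\<exists>ys. u = Tup ys)"
  by (cases rule: s_step_in_tup.cases) auto

lemma no_s_step_in_tup_into_constant [simp]:
  "\<not> s_step_in_tup t LC1" "\<not> s_step_in_tup t LC2" "\<not> s_step_in_tup t LT1"
  "\<not> s_step_in_tup t LF1" "\<not> s_step_in_tup t LK1" "\<not> s_step_in_tup t LT"
  "\<not> s_step_in_tup t LF" "\<not> s_step_in_tup t (LSl ns)"
  by (auto dest: s_step_in_tup_target)

lemma S_redex_postpone_s_step_in_tup: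
  assumes "S_redex_args ns ys zss"
    and "s_step_in_tup t (LApp (LApp (LApp (LSl ns) x) (mktup ys)) (Tup (concat zss)))"
  shows "\<exists>w. s_root t w \<and> s_step\<^sup>=\<^sup>= w (S_contractum x ys zss)"
proof -
  have len: "length (tl zss) = length ys" "ys \<noteq> []"
    using assms(1) unfolding S_redex_args_def by auto
  from assms(2) consider
      (x) x0 where "t = LApp (LApp (LApp (LSl ns) x0) (mktup ys)) (Tup (concat zss))"
        "s_step_in_tup x0 x"
    | (y) Y where "t = LApp (LApp (LApp (LSl ns) x) Y) (Tup (concat zss))"
        "s_step_in_tup Y (mktup ys)"
    | (z) Z where "t = LApp (LApp (LApp (LSl ns) x) (mktup ys)) Z"
        "s_step_in_tup Z (Tup (concat zss))"
    by (elim s_step_in_tup_LAppE) (auto dest: s_step_in_tup_target)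
  then show ?thesis
  proof cases
    case x
    have "s_step (S_contractum x0 ys zss) (S_contractum x ys zss)"
      using x(2) unfolding S_contractum_def
      by (intro s_ctx.appL s_step_in_tup_into_s_step)
    with x(1) s_root_S[OF assms(1)] show ?thesis by blast
  next
    case y
    from y(2) len(2) obtain i a where i: "i < length ys" "Y = mktup (ys[i := a])" "s_step a (ys ! i)"
      by (rule s_step_in_tup_mktupE)
    have "s_root t (S_contractum x (ys[i := a]) zss)"
      using y(1) i s_root_S[OF S_redex_args_update_y[OF assms(1) i(1,3)]] by simp
    with S_contractum_update_y[OF len(1) i(1,3)] show ?thesis by blast
  next
    case z
    from z(2) obtain j d where j: "j < length (concat zss)" "Z = Tup ((concat zss)[j := d])"
      "s_step d (concat zss ! j)"
      by (rule s_step_in_tup_TupE)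
    from j(1) obtain i k where ik: "i < length zss" "k < length (zss ! i)"
      "concat zss ! j = zss ! i ! k" "(concat zss)[j := d] = concat (zss[i := (zss ! i)[k := d]])"
      by (rule concat_list_update)
    have "s_root t (S_contractum x ys (zss[i := (zss ! i)[k := d]]))"
      using z(1) j(2) ik(4) s_root_S[OF S_redex_args_update_z[OF assms(1) ik(1,2)]] j(3) ik(3)
      by simp
    with S_contractum_update_z[OF len(1) ik(1,2)] j(3) ik(3) show ?thesis by auto
  qed
qed

lemma s_root_postpone_s_step_in_tup:
  "s_root u v \<Longrightarrow> s_step_in_tup t u \<Longrightarrow> \<exists>w. s_root t w \<and> s_step\<^sup>=\<^sup>= w v"
proof (induction rule: s_root.induct)
  case (r3 x y z)
  from r3(2) consider (z) z0 where "t = LApp (LApp (LApp LC2 z0) x) y"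
    | (x) x0 where "t = LApp (LApp (LApp LC2 z) x0) y" "s_step_in_tup x0 x"
    | (y) y0 where "t = LApp (LApp (LApp LC2 z) x) y0" "s_step_in_tup y0 y"
    by (elim s_step_in_tup_LAppE) (auto dest: s_step_in_tup_target)
  then show ?case
  proof cases
    case z
    then show ?thesis using r3(1) by (auto intro: s_root.r3)
  next
    case x
    then have "s_step x0 x" by (simp add: s_step_in_tup_into_s_step)
    then have "clc_conv (lerase x0) (lerase y)"
      using r3(1) by (blast intro: s_ctx_lerase_conv clc_conv_trans)
    with x \<open>s_step x0 x\<close> show ?thesis by (auto intro: s_root.r3)
  next
    case y
    then have "clc_conv (lerase y) (lerase y0)"
      by (blast intro: s_ctx_lerase_conv clc_conv_sym s_step_in_tup_into_s_step)
    with y r3(1) show ?thesis by (auto intro: s_root.r3 clc_conv_trans)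
  qed
next
  case (rS ys ns zss x)
  then have "S_redex_args ns ys zss"
    unfolding S_redex_args_def erasures_convertible_def by blast
  from this rS.prems show ?case
    unfolding S_contractum_def[symmetric] by (rule S_redex_postpone_s_step_in_tup)
qed (fastforce elim!: s_step_in_tup_LAppE intro: s_root.intros s_step_in_tup_into_s_step)+

lemma s_step_notup_postpone_s_step_in_tup:
  "s_step_notup u v \<Longrightarrow> s_step_in_tup t u \<Longrightarrow> \<exists>w. s_step_notup t w \<and> s_step\<^sup>=\<^sup>= w v"
proof (induction arbitrary: t rule: s_ctx.induct)
  case (root u v)
  from s_root_postpone_s_step_in_tup[OF root.hyps root.prems] show ?case
    by (blast intro: s_ctx.root)
next
  case (appL a a' b)
  from appL.prems show ?case
  proof (cases rule: s_step_in_tup_LAppE)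
    case (left a0)
    with appL.IH obtain w where "s_step_notup a0 w" "s_step\<^sup>=\<^sup>= w a'" by blast
    with left show ?thesis by (auto intro: s_ctx.appL)
  next
    case (right b0)
    have "s_step_notup t (LApp a' b0)" using right appL.hyps by (simp add: s_ctx.appL)
    moreover have "s_step (LApp a' b0) (LApp a' b)"
      using right by (simp add: s_ctx.appR s_step_in_tup_into_s_step)
    ultimately show ?thesis by auto
  qed
next
  case (appR b b' a)
  from appR.prems show ?case
  proof (cases rule: s_step_in_tup_LAppE)
    case (left a0)
    have "s_step_notup t (LApp a0 b')" using left appR.hyps by (simp add: s_ctx.appR)
    moreover have "s_step (LApp a0 b') (LApp a b')"
      using left by (simp add: s_ctx.appL s_step_in_tup_into_s_step)
    ultimately show ?thesis by auto
  next
    case (right b0)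
    with appR.IH obtain w where "s_step_notup b0 w" "s_step\<^sup>=\<^sup>= w b'" by blast
    with right show ?thesis by (auto intro: s_ctx.appR)
  qed
qed simp

lemma s_step_in_tup_prepend_notup_rtranclp:
  assumes "s_step_notup\<^sup>*\<^sup>* u v" "s_step_in_tup t u" "\<And>t'. \<not> s_step_in_tup t' v"
  shows "s_step_notup\<^sup>*\<^sup>* t v"
  using assms(1,2)
proof (induction arbitrary: t rule: converse_rtranclp_induct)
  case base
  with assms(3) show ?case by blast
next
  case (step u u')
  from s_step_notup_postpone_s_step_in_tup[OF step(1,4)]
  obtain w where w: "s_step_notup t w" "s_step\<^sup>=\<^sup>= w u'" by blast
  \<comment> \<open>the postponed step is outer, or again inside a tuple and then covered by the IH\<close>
  from w(2) have "s_step_notup\<^sup>*\<^sup>* w v"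
  proof
    assume "s_step w u'"
    with step(2,3) show ?thesis
      by (auto dest: s_step_cases intro: converse_rtranclp_into_rtranclp)
  qed (use step(2) in simp)
  with w(1) show ?case by (rule converse_rtranclp_into_rtranclp)
qed

theorem mainTheorem16:
  assumes "wf_lterm t"
    and "s_step\<^sup>*\<^sup>* t LF1"
  shows "s_step_notup\<^sup>*\<^sup>* t LF1"
  using assms(2)
proof (induction rule: converse_rtranclp_induct)
  case (step t t')
  from s_step_cases[OF step(1)] show ?case
  proof
    assume "s_step_notup t t'"
    then show ?thesis using step(3) by (rule converse_rtranclp_into_rtranclp)
  next
    assume "s_step_in_tup t t'"
    with step(3) show ?thesis by (rule s_step_in_tup_prepend_notup_rtranclp) simp
  qed
qed simp

end
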